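(* For every $M\in\Lambda^{\mathrm{rb}}$, at most one reduction sequence starts from $M$. Here a reduction sequence from $M$ means a maximal sequence $M\equiv M_0\to M_1\to M_2\to\cdots$, which is either infinite or ends in a term having no $\to$-reduct.
   Context: **$\lambda$-terms and contexts.** $\Lambda$ is the set of untyped $\lambda$-terms (up to $\alpha$-equivalence). A context $C[\,]$ is a $\lambda$-term with exactly one hole $[\,]$. $C[M]$ is the result of filling the hole with $M$; binders of $C$ may capture free variables of $M$. We write $M\,\vec N$ for $M\,N_1\cdots N_n$ (left-associated), where $n\ge 0$. **Atoms and $\Lambda^\bullet$.** For each $M\in\Lambda$ there is a new formal symbol $\underline{M}$, called an atom. Atoms are constants: they have no free variables, and substitution leaves them unchanged. For $M\in\Lambda$, $M^\bullet$ replaces each free occurrence of each variable $x$ in $M$ by the atom $\underline{x}$. Set $\Lambda^\bullet=\{M^\bullet: M\in\Lambda\}$, with substitution extended to these terms by treating atoms as constants. **The set $\Lambda^{\mathrm{rb}}$.** It is the least set such that: 1. $\underline{M}\in\Lambda^{\mathrm{rb}}$ for all $M\in\Lambda$; 2. $\langle C[\,],M\rangle\in\Lambda^{\mathrm{rb}}$ for every context $C[\,]$ and every $M\in\Lambda^\bullet$; 3. $\langle C[\,],M\,\vec N\rangle\in\Lambda^{\mathrm{rb}}$ for every context $C[\,]$, every $M\in\Lambda^{\mathrm{rb}}$ and all $N_1,\dots,N_n\in\Lambda^\bullet$. **The relation $\to$ on $\Lambda^{\mathrm{rb}}$.** It is the least relation satisfying: - (R1) $\langle C[\,],\underline{M}\rangle\to\underline{C[M]}$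 for $M\in\Lambda$; - (R2) $\langle C[\,],\lambda x.M\rangle\to\langle C[\lambda x.[\,]],M[x:=\underline{x}]\rangle$ for $\lambda x.M\in\Lambda^\bullet$; - (R3) $\langle C[\,],\underline{M}\,N_0\,\vec N\rangle\to\langle C[\,],\langle M\,[\,],N_0\rangle\,\vec N\rangle$ for $M\in\Lambda$ and $N_0,\vec N\in\Lambda^\bullet$; - (R4) $\langle C[\,],(\lambda x.M)\,N_0\,\vec N\rangle\to\langle C[\,],M[x:=N_0]\,\vec N\rangle$ for $\lambda x.M,N_0,\vec N\in\Lambda^\bullet$; - (R5) if $M\to M'$ with $M,M'\in\Lambda^{\mathrm{rb}}$, then $\langle C[\,],M\,\vec N\rangle\to\langle C[\,],M'\,\vec N\rangle$ for every context $C[\,]$ and $\vec N\in\Lambda^\bullet$. *)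

theory Defs
  imports Main "HOL-Library.Extended_Nat"
begin

datatype 'v lterm = LVar 'v | LLam 'v "'v lterm" | LApp "'v lterm" "'v lterm"

(* One-hole contexts; binders are named and capture free variables of what is plugged in. *)
datatype 'v ctx = Hole | CLam 'v "'v ctx" | CAppL "'v ctx" "'v lterm" | CAppR "'v lterm" "'v ctx"

fun plug :: "'v ctx \<Rightarrow> 'v lterm \<Rightarrow> 'v lterm" where
  "plug Hole M = M"
| "plug (CLam x C) M = LLam x (plug C M)"
| "plug (CAppL C N) M = LApp (plug C M) N"
| "plug (CAppR N C) M = LApp N (plug C M)"

fun cplug :: "'v ctx \<Rightarrow> 'v ctx \<Rightarrow> 'v ctx" where
  "cplug Hole D = D"
| "cplug (CLam x C) D = CLam x (cplug C D)"
| "cplug (CAppL C N) D = CAppL (cplug C D) N"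
| "cplug (CAppR N C) D = CAppR N (cplug C D)"

(* Terms over atoms: lambda-terms extended with atoms \<underline>M (Atom M) and
   pairs <C[ ], M> (Pair C M).  Lambda^bullet and Lambda^rb are subsets of this type. *)
datatype 'v tm = TVar 'v | TLam 'v "'v tm" | TApp "'v tm" "'v tm"
  | Atom "'v lterm" | Pair "'v ctx" "'v tm"

definition apps :: "'v tm \<Rightarrow> 'v tm list \<Rightarrow> 'v tm" where
  "apps M Ns = foldl TApp M Ns"

fun bullet_aux :: "'v set \<Rightarrow> 'v lterm \<Rightarrow> 'v tm" where
  "bullet_aux B (LVar x) = (if x \<in> B then TVar x else Atom (LVar x))"
| "bullet_aux B (LLam x M) = TLam x (bullet_aux (insert x B) M)"
| "bullet_aux B (LApp M N) = TApp (bullet_aux B M) (bullet_aux B N)"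

definition bullet :: "'v lterm \<Rightarrow> 'v tm" where
  "bullet M = bullet_aux {} M"

(* Lambda^bullet = { M^bullet | M in Lambda }, closed under renaming of bound variables:
   pair-free terms without free variables whose atoms are all of the form \<underline>x. *)
fun is_bul :: "'v set \<Rightarrow> 'v tm \<Rightarrow> bool" where
  "is_bul B (TVar x) = (x \<in> B)"
| "is_bul B (TLam x M) = is_bul (insert x B) M"
| "is_bul B (TApp M N) = (is_bul B M \<and> is_bul B N)"
| "is_bul B (Atom a) = (\<exists>v. a = LVar v)"
| "is_bul B (Pair C M) = False"

definition Bul :: "'v tm set" where
  "Bul = {M. is_bul {} M}"

(* substitution M[x:=N]; atoms are constants.  Only used with closed N (N in Lambda^bullet),
   so no capture can occur. *)
fun subst :: "'v tm \<Rightarrow> 'v \<Rightarrow> 'v tm \<Rightarrow> 'v tm" where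
  "subst (TVar y) x N = (if y = x then N else TVar y)"
| "subst (TLam y M) x N = (if y = x then TLam y M else TLam y (subst M x N))"
| "subst (TApp M1 M2) x N = TApp (subst M1 x N) (subst M2 x N)"
| "subst (Atom a) x N = Atom a"
| "subst (Pair C M) x N = Pair C M"

inductive_set RB :: "'v tm set" where
  rb_atom: "Atom M \<in> RB"
| rb_bul: "M \<in> Bul \<Longrightarrow> Pair C M \<in> RB"
| rb_app: "M \<in> RB \<Longrightarrow> set Ns \<subseteq> Bul \<Longrightarrow> Pair C (apps M Ns) \<in> RB"

inductive step :: "'v tm \<Rightarrow> 'v tm \<Rightarrow> bool" where
  R1: "step (Pair C (Atom M)) (Atom (plug C M))"
| R2: "TLam x M \<in> Bul \<Longrightarrow>
       step (Pair C (TLam x M)) (Pair (cplug C (CLam x Hole)) (subst M x (Atom (LVar x))))"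
| R3: "N0 \<in> Bul \<Longrightarrow> set Ns \<subseteq> Bul \<Longrightarrow>
       step (Pair C (apps (Atom M) (N0 # Ns)))
            (Pair C (apps (Pair (CAppR M Hole) N0) Ns))"
| R4: "TLam x M \<in> Bul \<Longrightarrow> N0 \<in> Bul \<Longrightarrow> set Ns \<subseteq> Bul \<Longrightarrow>
       step (Pair C (apps (TLam x M) (N0 # Ns))) (Pair C (apps (subst M x N0) Ns))"
| R5: "step M M' \<Longrightarrow> M \<in> RB \<Longrightarrow> M' \<in> RB \<Longrightarrow> set Ns \<subseteq> Bul \<Longrightarrow>
       step (Pair C (apps M Ns)) (Pair C (apps M' Ns))"

(* A reduction sequence from M: M = f 0 \<rightarrow> f 1 \<rightarrow> ... with len steps (len = \<infinity> for an
   infinite sequence); if finite, the last term f len has no reduct. *)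
definition red_seq :: "'v tm \<Rightarrow> (nat \<Rightarrow> 'v tm) \<Rightarrow> enat \<Rightarrow> bool" where
  "red_seq M f len \<longleftrightarrow>
     f 0 = M \<and>
     (\<forall>i. enat i < len \<longrightarrow> step (f i) (f (Suc i))) \<and>
     (\<forall>n. len = enat n \<longrightarrow> \<not> (\<exists>N. step (f n) N))"

end

theory Submission
  imports Defs
begin

text \<open>
  The reduction relation is deterministic: in a pair \<open>\<langle>C, H N\<^sub>1 \<dots> N\<^sub>n\<rangle>\<close> the head \<open>H\<close>
  of the application spine is an atom, an abstraction or a pair, and it alone selects
  which rule applies -- R1/R2 when \<open>n = 0\<close>, R3/R4 when \<open>n > 0\<close>, and R5 (recursively,
  inside \<open>H\<close>) when \<open>H\<close> is a pair. A deterministic relation has at most one maximal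
  reduction sequence from each term: two of them agree step by step, and neither can
  stop while the other continues.
\<close>

fun is_app :: "'v tm \<Rightarrow> bool" where
  "is_app (TApp M N) = True"
| "is_app _ = False"

lemma apps_Nil [simp]: "apps M [] = M"
  by (simp add: apps_def)

lemma apps_snoc: "apps M (Ns @ [N]) = TApp (apps M Ns) N"
  by (simp add: apps_def)

lemma apps_eq_non_app_iff:
  assumes "\<not> is_app T"
  shows "apps M Ns = T \<longleftrightarrow> M = T \<and> Ns = []"
    and "T = apps M Ns \<longleftrightarrow> M = T \<and> Ns = []"
  using assms by (cases Ns rule: rev_exhaust; auto simp: apps_snoc)+

lemma apps_eq_apps_iff:
  assumes "\<not> is_app M" and "\<not> is_app M'"
  shows "apps M Ns = apps M' Ns' \<longleftrightarrow> M = M' \<and> Ns = Ns'"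
proof (induction Ns arbitrary: Ns' rule: rev_induct)
  case Nil
  show ?case using apps_eq_non_app_iff(1)[OF assms(1), of M' Ns'] by auto
next
  case (snoc N Ns)
  show ?case
    using apps_eq_non_app_iff(1)[of "apps M (Ns @ [N])" M'] assms snoc.IH
    by (cases Ns' rule: rev_exhaust) (auto simp: apps_snoc)
qed

lemma step_source_Pair: "step M N \<Longrightarrow> \<exists>C X. M = Pair C X"
  by (induction rule: step.induct) auto

lemma step_deterministic: "step M N \<Longrightarrow> step M N' \<Longrightarrow> N = N'"
proof (induction M N arbitrary: N' rule: step.induct)
  case (R5 M M' Ns C)
  obtain C\<^sub>0 X where M: "M = Pair C\<^sub>0 X"
    using step_source_Pair[OF R5.hyps(1)] by blast
  from R5.prems show ?case
  proof cases
    case (R5 M\<^sub>2 M\<^sub>2' Ns\<^sub>2)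
    then show ?thesis
      using M R5.IH step_source_Pair[of M\<^sub>2 M\<^sub>2'] by (auto simp: apps_eq_apps_iff)
  qed (use M in \<open>auto simp: apps_eq_apps_iff apps_eq_non_app_iff\<close>)
qed (erule step.cases; auto simp: apps_eq_apps_iff apps_eq_non_app_iff dest!: step_source_Pair)+

definition maximal_run :: "('a \<Rightarrow> 'a \<Rightarrow> bool) \<Rightarrow> 'a \<Rightarrow> (nat \<Rightarrow> 'a) \<Rightarrow> enat \<Rightarrow> bool" where
  "maximal_run r x f len \<longleftrightarrow>
     f 0 = x \<and>
     (\<forall>i. enat i < len \<longrightarrow> r (f i) (f (Suc i))) \<and>
     (\<forall>n. len = enat n \<longrightarrow> \<not> (\<exists>y. r (f n) y))"

lemma red_seq_eq_maximal_run: "red_seq = maximal_run step"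
  by (simp add: fun_eq_iff red_seq_def maximal_run_def)

locale deterministic =
  fixes r :: "'a \<Rightarrow> 'a \<Rightarrow> bool"
  assumes deterministic: "r x y \<Longrightarrow> r x z \<Longrightarrow> y = z"
begin

lemma maximal_runs_agree:
  assumes "maximal_run r x f lf" and "maximal_run r x g lg"
    and "enat i \<le> lf" and "enat i \<le> lg"
  shows "f i = g i"
  using assms(3,4)
proof (induction i)
  case 0
  show ?case using assms(1,2) by (simp add: maximal_run_def)
next
  case (Suc i)
  then have "enat i < lf" and "enat i < lg"
    by (simp_all add: Suc_ile_eq)
  with Suc.IH assms(1,2) show ?case
    by (auto simp: maximal_run_def intro: deterministic)
qed

lemma maximal_run_not_shorter:
  assumes "maximal_run r x f lf" and "maximal_run r x g lg"
  shows "\<not> lf < lg"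
proof
  assume "lf < lg"
  then obtain n where n: "lf = enat n" by (cases lf) auto
  with \<open>lf < lg\<close> have "f n = g n" and "r (g n) (g (Suc n))"
    using assms maximal_runs_agree[OF assms] by (auto simp: maximal_run_def)
  with n assms(1) show False by (auto simp: maximal_run_def)
qed

theorem maximal_run_unique:
  assumes "maximal_run r x f lf" and "maximal_run r x g lg"
  shows "lf = lg \<and> (\<forall>i. enat i \<le> lf \<longrightarrow> f i = g i)"
proof -
  have "lf = lg"
    using maximal_run_not_shorter[OF assms] maximal_run_not_shorter[OF assms(2,1)] by simp
  with maximal_runs_agree[OF assms] show ?thesis by simp
qed

end

interpretation step: deterministic step
  by unfold_locales (rule step_deterministic)

text \<open>Determinism holds on all terms.\<close>

theorem proposition5:
  fixes M :: "'v tm"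
  assumes "M \<in> RB"
    and "red_seq M f lf"
    and "red_seq M g lg"
  shows "lf = lg \<and> (\<forall>i. enat i \<le> lf \<longrightarrow> f i = g i)"
  using assms(2,3) unfolding red_seq_eq_maximal_run by (rule step.maximal_run_unique)

end
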